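(* Let $\mathbb I$ be an index coding problem with message set ${\cal W}$ and let ${\cal W}'\subseteq{\cal W}$. If there is a ${\cal W}'$-restricted internal conflict, then the restricted problem ${\mathbb I}_{{\cal W}'}$ admits no valid scalar linear index code of length $2$ over any finite field. If there are no ${\cal W}'$-restricted internal conflicts, then ${\mathbb I}_{{\cal W}'}$ admits a valid scalar linear index code of length $2$ over every sufficiently large finite field.
   Context: Index coding setup: An index coding problem $\mathbb I$ over a finite field $\mathbb F$ consists of a set of messages ${\cal W}=\{W_1,\dots,W_n\}$ (each message is a symbol of $\mathbb F$ in the scalar setting), a set of receivers $[1:T]$, and for each receiver $j$ a demand set $D(j)\subseteq{\cal W}$ and a side-information set $S(j)\subseteq {\cal W}\setminus D(j)$. Every message is demanded by at least one receiver. For a receiver $j$ and $W_k\in D(j)$, the interfering set is $Interf_k(j)={\cal W}\setminus(\{W_k\}\cup S(j))$; if $W_k\notin D(j)$ then $Interf_k(j)=\emptyset$. A scalar linear index code of length $L$ over $\mathbb F$ is an assignment of vectors $V_1,\dots,V_n\in\mathbb F^L$ to the messages; the source broadcasts $\sum_{i=1}^n V_iW_i\in\mathbb F^L$, and the code is valid if every receiver $j$ can recover every message of $D(j)$ from the broadcast codeword and the messages in $S(j)$. Two distinct messages $W_i,W_k$ are in conflict if there is a receiver $j$ with $W_k\in D(j)$ and $W_i\in Interf_k(j)$, or a receiver $j$ with $W_i\in D(j)$ and $W_k\in Interf_i(j)$. Alignment graph: the graph with vertex set ${\cal W}$ in which distinct $W_a,W_b$ are adjacent if there exist a receiver $j$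 and a message $W_k\in D(j)$ with $W_k\notin\{W_a,W_b\}$ and $W_a,W_b\notin S(j)$. An alignment set is the vertex set of a connected component of the alignment graph. An internal conflict is a conflict between two messages lying in the same alignment set. Restricted problem: for ${\cal W}'\subseteq{\cal W}$, the ${\cal W}'$-restricted index coding problem ${\mathbb I}_{{\cal W}'}$ has message set ${\cal W}'$, receivers the receivers $j$ of $\mathbb I$ with $D(j)\cap{\cal W}'\neq\emptyset$, and for each such $j$ demand set $D(j)\cap{\cal W}'$ and side-information set $S(j)\cap{\cal W}'$. The ${\cal W}'$-restricted alignment graph, alignment sets and internal conflicts are the alignment graph, alignment sets and internal conflicts of ${\mathbb I}_{{\cal W}'}$ (conflicts being computed in ${\mathbb I}_{{\cal W}'}$). *)

theory Defs
  imports "HOL-Algebra.Ring" "HOL-Algebra.Ring_Divisibility"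
begin

definition index_coding_problem ::
  "'m set \<Rightarrow> nat set \<Rightarrow> (nat \<Rightarrow> 'm set) \<Rightarrow> (nat \<Rightarrow> 'm set) \<Rightarrow> bool" where
  "index_coding_problem W R D S \<longleftrightarrow>
     finite W \<and> finite R \<and>
     (\<forall>j\<in>R. D j \<subseteq> W \<and> S j \<subseteq> W - D j) \<and>
     (\<forall>w\<in>W. \<exists>j\<in>R. w \<in> D j)"

definition Interf :: "'m set \<Rightarrow> (nat \<Rightarrow> 'm set) \<Rightarrow> (nat \<Rightarrow> 'm set) \<Rightarrow> nat \<Rightarrow> 'm \<Rightarrow> 'm set" where
  "Interf W D S j k = (if k \<in> D j then W - ({k} \<union> S j) else {})"

definition in_conflict ::
  "'m set \<Rightarrow> nat set \<Rightarrow> (nat \<Rightarrow> 'm set) \<Rightarrow> (nat \<Rightarrow> 'm set) \<Rightarrow> 'm \<Rightarrow> 'm \<Rightarrow> bool" where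
  "in_conflict W R D S a b \<longleftrightarrow>
     a \<in> W \<and> b \<in> W \<and> a \<noteq> b \<and>
     ((\<exists>j\<in>R. b \<in> D j \<and> a \<in> Interf W D S j b) \<or>
      (\<exists>j\<in>R. a \<in> D j \<and> b \<in> Interf W D S j a))"

definition align_edge ::
  "'m set \<Rightarrow> nat set \<Rightarrow> (nat \<Rightarrow> 'm set) \<Rightarrow> (nat \<Rightarrow> 'm set) \<Rightarrow> 'm \<Rightarrow> 'm \<Rightarrow> bool" where
  "align_edge W R D S a b \<longleftrightarrow>
     a \<in> W \<and> b \<in> W \<and> a \<noteq> b \<and>
     (\<exists>j\<in>R. \<exists>k\<in>D j. k \<noteq> a \<and> k \<noteq> b \<and> a \<notin> S j \<and> b \<notin> S j)"

definition same_alignment_set ::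
  "'m set \<Rightarrow> nat set \<Rightarrow> (nat \<Rightarrow> 'm set) \<Rightarrow> (nat \<Rightarrow> 'm set) \<Rightarrow> 'm \<Rightarrow> 'm \<Rightarrow> bool" where
  "same_alignment_set W R D S a b \<longleftrightarrow>
     a \<in> W \<and> b \<in> W \<and> (align_edge W R D S)\<^sup>*\<^sup>* a b"

definition has_internal_conflict ::
  "'m set \<Rightarrow> nat set \<Rightarrow> (nat \<Rightarrow> 'm set) \<Rightarrow> (nat \<Rightarrow> 'm set) \<Rightarrow> bool" where
  "has_internal_conflict W R D S \<longleftrightarrow>
     (\<exists>a b. in_conflict W R D S a b \<and> same_alignment_set W R D S a b)"

definition restr_receivers :: "'m set \<Rightarrow> nat set \<Rightarrow> (nat \<Rightarrow> 'm set) \<Rightarrow> nat set" where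
  "restr_receivers W' R D = {j \<in> R. D j \<inter> W' \<noteq> {}}"

definition restr_sets :: "'m set \<Rightarrow> (nat \<Rightarrow> 'm set) \<Rightarrow> nat \<Rightarrow> 'm set" where
  "restr_sets W' X = (\<lambda>j. X j \<inter> W')"

definition codeword :: "('e, 'x) ring_scheme \<Rightarrow> 'm set \<Rightarrow> ('m \<Rightarrow> nat \<Rightarrow> 'e) \<Rightarrow> ('m \<Rightarrow> 'e) \<Rightarrow> nat \<Rightarrow> 'e" where
  "codeword Fld W V w l = finsum Fld (\<lambda>i. V i l \<otimes>\<^bsub>Fld\<^esub> w i) W"

definition valid_scalar_linear_code ::
  "('e, 'x) ring_scheme \<Rightarrow> 'm set \<Rightarrow> nat set \<Rightarrow> (nat \<Rightarrow> 'm set) \<Rightarrow> (nat \<Rightarrow> 'm set)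
     \<Rightarrow> nat \<Rightarrow> ('m \<Rightarrow> nat \<Rightarrow> 'e) \<Rightarrow> bool" where
  "valid_scalar_linear_code Fld W R D S L V \<longleftrightarrow>
     (\<forall>i\<in>W. \<forall>l<L. V i l \<in> carrier Fld) \<and>
     (\<forall>j\<in>R. \<forall>k\<in>D j. \<forall>w w'.
        w \<in> W \<rightarrow> carrier Fld \<and> w' \<in> W \<rightarrow> carrier Fld \<and>
        (\<forall>i\<in>S j. w i = w' i) \<and>
        (\<forall>l<L. codeword Fld W V w l = codeword Fld W V w' l)
        \<longrightarrow> w k = w' k)"

end

(*
  A length-2 code gives each message a vector in F^2.  If a receiver demanding k does not
  know a and b, it can only decode k when the vectors of a and b are parallel (otherwise a
  combination of them cancels the vector of k); parallelism of nonzero vectors is transitive,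
  so all messages of an alignment set get parallel vectors.  If a interferes with a receiver
  demanding b, the vectors of a and b must be independent.  So an internal conflict rules
  out every code of length 2.

  Conversely, without internal conflicts give message i the vector (1, x i), where x is
  constant on each alignment set and takes distinct values on distinct ones, which is
  possible as soon as |F| >= |W|.  For a receiver demanding k, the messages it does not know
  are pairwise aligned and in conflict with k, so x takes a single value c on them and a
  different value at k.  The second coordinate of the codeword minus c times the first then
  involves, besides the known messages, only (x k - c) times the k-th message.
*)

theory Submission
  imports Defs
begin

lemma same_alignment_set_refl: "a \<in> W \<Longrightarrow> same_alignment_set W R D S a a"
  unfolding same_alignment_set_def by simp

lemma same_alignment_set_sym:
  assumes "same_alignment_set W R D S a b"
  shows "same_alignment_set W R D S b a"
proof -
  have "symp (align_edge W R D S)"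
    unfolding align_edge_def symp_def by blast
  then have "symp (align_edge W R D S)\<^sup>*\<^sup>*"
    by (rule symp_rtranclp)
  with assms show ?thesis
    unfolding same_alignment_set_def by (blast dest: sympD)
qed

lemma same_alignment_set_trans:
  "same_alignment_set W R D S a b \<Longrightarrow> same_alignment_set W R D S b c \<Longrightarrow> same_alignment_set W R D S a c"
  unfolding same_alignment_set_def by (meson rtranclp_trans)

lemma same_alignment_set_if_interfering:
  assumes "j \<in> R" "k \<in> D j" "a \<in> W - S j - {k}" "b \<in> W - S j - {k}"
  shows "same_alignment_set W R D S a b"
proof (cases "a = b")
  case True
  with assms show ?thesis
    using same_alignment_set_refl by auto
next
  case False
  with assms have "align_edge W R D S a b"
    unfolding align_edge_def by auto
  with assms show ?thesis
    unfolding same_alignment_set_def by auto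
qed

lemma in_conflict_if_interfering:
  assumes "j \<in> R" "k \<in> D j" "k \<in> W" "a \<in> W - S j - {k}"
  shows "in_conflict W R D S k a"
  using assms unfolding in_conflict_def Interf_def by auto

lemma obtain_internal_conflict:
  assumes "has_internal_conflict W R D S"
  obtains a b j where "j \<in> R" "b \<in> D j" "a \<in> Interf W D S j b" "same_alignment_set W R D S a b"
  using assms same_alignment_set_sym unfolding has_internal_conflict_def in_conflict_def by metis

lemma obtain_labelling_iff_related:
  assumes "finite W" "finite C" "card W \<le> card C"
    and refl: "\<And>a. a \<in> W \<Longrightarrow> r a a"
    and sym: "\<And>a b. r a b \<Longrightarrow> r b a"
    and trans: "\<And>a b c. r a b \<Longrightarrow> r b c \<Longrightarrow> r a c"
  obtains x where "x \<in> W \<rightarrow> C" "\<And>a b. a \<in> W \<Longrightarrow> b \<in> W \<Longrightarrow> x a = x b \<longleftrightarrow> r a b"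
proof -
  define cls where "cls a = {b \<in> W. r a b}" for a
  have "card (cls ` W) \<le> card C"
    using card_image_le[OF \<open>finite W\<close>, of cls] assms(3) by linarith
  then obtain g where g: "g ` cls ` W \<subseteq> C" "inj_on g (cls ` W)"
    using card_le_inj[of "cls ` W" C] \<open>finite W\<close> \<open>finite C\<close> by auto
  have cls_eq_iff: "cls a = cls b \<longleftrightarrow> r a b" if "a \<in> W" "b \<in> W" for a b
  proof
    assume "cls a = cls b"
    moreover have "b \<in> cls b"
      unfolding cls_def using refl \<open>b \<in> W\<close> by simp
    ultimately show "r a b"
      unfolding cls_def by blast
  next
    assume "r a b"
    then have "r a c \<longleftrightarrow> r b c" for c
      using sym trans by metis
    then show "cls a = cls b"
      unfolding cls_def by simp
  qed
  show ?thesis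
  proof (rule that[of "g \<circ> cls"])
    show "g \<circ> cls \<in> W \<rightarrow> C"
      using g(1) by auto
    show "(g \<circ> cls) a = (g \<circ> cls) b \<longleftrightarrow> r a b" if "a \<in> W" "b \<in> W" for a b
      using cls_eq_iff[OF that] inj_onD[OF g(2)] that by auto
  qed
qed

lemma index_coding_problem_restrict:
  assumes "index_coding_problem W R D S" "W' \<subseteq> W"
  shows "index_coding_problem W' (restr_receivers W' R D) (restr_sets W' D) (restr_sets W' S)"
  using assms finite_subset
  unfolding index_coding_problem_def restr_receivers_def restr_sets_def by fastforce

lemma (in ring) codeword_eq_finsum_on_support:
  assumes "finite W" "A \<subseteq> W" "\<forall>i\<in>W. V i l \<in> carrier R" "w \<in> W \<rightarrow> carrier R"
    and "\<forall>i\<in>W - A. w i = \<zero>"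
  shows "codeword R W V w l = (\<Oplus>i\<in>A. V i l \<otimes> w i)"
  unfolding codeword_def
  by (rule add.finprod_mono_neutral_cong_right) (use assms in auto)

lemma (in ring) valid_code_kernel_demand_zero:
  assumes "valid_scalar_linear_code R W Rcv D S L V" "j \<in> Rcv" "k \<in> D j"
    and "w \<in> W \<rightarrow> carrier R" "\<forall>i\<in>S j. w i = \<zero>" "\<forall>l<L. codeword R W V w l = \<zero>"
  shows "w k = \<zero>"
proof -
  have V: "\<forall>i\<in>W. \<forall>l<L. V i l \<in> carrier R"
    using assms(1) unfolding valid_scalar_linear_code_def by blast
  have "codeword R W V (\<lambda>_. \<zero>) l = (\<Oplus>i\<in>W. \<zero>)" if "l < L" for l
    unfolding codeword_def by (rule finsum_cong') (use V that in auto)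
  with assms(6) have same_codeword: "\<forall>l<L. codeword R W V w l = codeword R W V (\<lambda>_. \<zero>) l"
    by simp
  from assms(1-3) have decode: "\<And>w w'. w \<in> W \<rightarrow> carrier R \<Longrightarrow> w' \<in> W \<rightarrow> carrier R \<Longrightarrow>
      \<forall>i\<in>S j. w i = w' i \<Longrightarrow> \<forall>l<L. codeword R W V w l = codeword R W V w' l \<Longrightarrow> w k = w' k"
    unfolding valid_scalar_linear_code_def by blast
  have "w k = (\<lambda>_. \<zero>) k"
    by (rule decode[OF assms(4) _ _ same_codeword]) (use assms(5) in auto)
  then show ?thesis
    by simp
qed

definition det2 :: "('e, 'x) ring_scheme \<Rightarrow> ('m \<Rightarrow> nat \<Rightarrow> 'e) \<Rightarrow> 'm \<Rightarrow> 'm \<Rightarrow> 'e" where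
  "det2 R V a b = V a 0 \<otimes>\<^bsub>R\<^esub> V b 1 \<ominus>\<^bsub>R\<^esub> V a 1 \<otimes>\<^bsub>R\<^esub> V b 0"

context field
begin

lemma det2_self:
  assumes "V a 0 \<in> carrier R" "V a 1 \<in> carrier R"
  shows "det2 R V a a = \<zero>"
  using assms unfolding det2_def by algebra

lemma det2_trans:
  assumes "V a 0 \<in> carrier R" "V a 1 \<in> carrier R" "V b 0 \<in> carrier R" "V b 1 \<in> carrier R"
    "V c 0 \<in> carrier R" "V c 1 \<in> carrier R"
    and b: "V b 0 \<noteq> \<zero> \<or> V b 1 \<noteq> \<zero>"
    and ab: "det2 R V a b = \<zero>" and bc: "det2 R V b c = \<zero>"
  shows "det2 R V a c = \<zero>"
proof -
  have "V b l \<otimes> det2 R V a c = V a l \<otimes> det2 R V b c \<oplus> V c l \<otimes> det2 R V a b" if "l \<in> {0, 1}" for l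
    using assms(1-6) that unfolding det2_def by (auto, algebra, algebra)
  then have "V b 0 \<otimes> det2 R V a c = \<zero>" "V b 1 \<otimes> det2 R V a c = \<zero>"
    using assms(1-6) by (simp_all add: ab bc)
  moreover have "det2 R V a c \<in> carrier R"
    using assms(1-6) unfolding det2_def by simp
  ultimately show ?thesis
    using b assms(3,4) integral_iff by blast
qed

lemma obtain_dependence_if_det2_eq_zero:
  assumes "V a 0 \<in> carrier R" "V a 1 \<in> carrier R" "V b 0 \<in> carrier R" "V b 1 \<in> carrier R"
    and a: "V a 0 \<noteq> \<zero> \<or> V a 1 \<noteq> \<zero>" and ab: "det2 R V a b = \<zero>"
  obtains p q where "p \<in> carrier R" "q \<in> carrier R" "p \<noteq> \<zero>"
    "V b 0 \<otimes> p \<oplus> V a 0 \<otimes> q = \<zero>" "V b 1 \<otimes> p \<oplus> V a 1 \<otimes> q = \<zero>"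
proof (cases "V a 0 = \<zero>")
  case False
  have "V b 0 \<otimes> V a 0 \<oplus> V a 0 \<otimes> \<ominus> V b 0 = \<zero>"
    "V b 1 \<otimes> V a 0 \<oplus> V a 1 \<otimes> \<ominus> V b 0 = det2 R V a b"
    using assms(1-4) unfolding det2_def by algebra+
  with False assms(1-4) ab show ?thesis
    by (intro that[of "V a 0" "\<ominus> V b 0"]) auto
next
  case True
  with a have "V a 1 \<noteq> \<zero>" by simp
  moreover have "V b 0 \<otimes> V a 1 \<oplus> V a 0 \<otimes> \<ominus> V b 1 = \<ominus> det2 R V a b"
    "V b 1 \<otimes> V a 1 \<oplus> V a 1 \<otimes> \<ominus> V b 1 = \<zero>"
    using assms(1-4) unfolding det2_def by algebra+
  ultimately show ?thesis
    using assms(1-4) ab by (intro that[of "V a 1" "\<ominus> V b 1"]) auto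
qed

context
  fixes W :: "'m set" and Rcv :: "nat set" and D S :: "nat \<Rightarrow> 'm set" and V :: "'m \<Rightarrow> nat \<Rightarrow> 'a"
  assumes valid: "valid_scalar_linear_code R W Rcv D S 2 V" and finite: "finite W"
begin

lemma code_vector_closed:
  assumes "i \<in> W"
  shows "V i 0 \<in> carrier R" "V i 1 \<in> carrier R"
  using valid assms unfolding valid_scalar_linear_code_def by auto

lemma code_vector_nonzero:
  assumes icp: "index_coding_problem W Rcv D S" and "k \<in> W"
  shows "V k 0 \<noteq> \<zero> \<or> V k 1 \<noteq> \<zero>"
proof (rule ccontr)
  assume "\<not> ?thesis"
  from icp \<open>k \<in> W\<close> obtain j where j: "j \<in> Rcv" "k \<in> D j" "k \<notin> S j"
    unfolding index_coding_problem_def by blast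
  define w where "w = (\<lambda>i. if i = k then \<one> else \<zero>)"
  have w: "w \<in> W \<rightarrow> carrier R"
    unfolding w_def by auto
  have "codeword R W V w l = V k l \<otimes> w k" if "l < 2" for l
    using codeword_eq_finsum_on_support[OF finite _ _ w, of "{k}" V l] valid that \<open>k \<in> W\<close>
    by (auto simp: w_def valid_scalar_linear_code_def)
  with \<open>\<not> ?thesis\<close> have "\<forall>l<2. codeword R W V w l = \<zero>"
    by (auto simp: w_def less_2_cases_iff)
  moreover have "\<forall>i\<in>S j. w i = \<zero>"
    using j by (auto simp: w_def)
  ultimately have "w k = \<zero>"
    using valid_code_kernel_demand_zero[OF valid j(1,2) w] by blast
  then show False
    by (simp add: w_def)
qed

lemma det2_eq_zero_if_interfering:
  assumes j: "j \<in> Rcv" "k \<in> D j" "k \<in> W - S j"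
    and ab: "a \<in> W - S j - {k}" "b \<in> W - S j - {k}" "a \<noteq> b"
  shows "det2 R V a b = \<zero>"
proof -
  have V: "V i l \<in> carrier R" if "i \<in> {k, a, b}" "l \<in> {0, 1}" for i l
    using code_vector_closed j ab that by auto
  \<comment> \<open>Cramer's rule: the cofactors of three vectors in a plane give a linear relation between them.\<close>
  define w where "w = (\<lambda>i. if i = k then det2 R V a b else if i = a then det2 R V b k
      else if i = b then det2 R V k a else \<zero>)"
  have w: "w \<in> W \<rightarrow> carrier R"
    using V unfolding w_def det2_def by auto
  have cofactor_relation:
    "V k l \<otimes> det2 R V a b \<oplus> (V a l \<otimes> det2 R V b k \<oplus> V b l \<otimes> det2 R V k a) = \<zero>"
    if "l \<in> {0, 1}" for l
    using V that unfolding det2_def by (auto, algebra, algebra)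
  have "codeword R W V w l = V k l \<otimes> det2 R V a b \<oplus> (V a l \<otimes> det2 R V b k \<oplus> V b l \<otimes> det2 R V k a)"
    if "l \<in> {0, 1}" for l
    using codeword_eq_finsum_on_support[OF finite _ _ w, of "{k, a, b}" V l] V j ab that code_vector_closed
    by (auto simp: w_def finsum_insert det2_def)
  with cofactor_relation have "\<forall>l<2. codeword R W V w l = \<zero>"
    by (auto simp: less_2_cases_iff)
  moreover have "\<forall>i\<in>S j. w i = \<zero>"
    using j ab by (auto simp: w_def)
  ultimately have "w k = \<zero>"
    using valid_code_kernel_demand_zero[OF valid j(1,2) w] by blast
  then show ?thesis
    by (simp add: w_def)
qed

lemma det2_neq_zero_if_conflict:
  assumes j: "j \<in> Rcv" "b \<in> D j" "b \<in> W - S j"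
    and a: "a \<in> W - S j - {b}" "V a 0 \<noteq> \<zero> \<or> V a 1 \<noteq> \<zero>"
  shows "det2 R V a b \<noteq> \<zero>"
proof
  assume "det2 R V a b = \<zero>"
  then obtain p q where pq: "p \<in> carrier R" "q \<in> carrier R" "p \<noteq> \<zero>"
    "V b 0 \<otimes> p \<oplus> V a 0 \<otimes> q = \<zero>" "V b 1 \<otimes> p \<oplus> V a 1 \<otimes> q = \<zero>"
    using obtain_dependence_if_det2_eq_zero[of V a b] code_vector_closed j a by blast
  define w where "w = (\<lambda>i. if i = b then p else if i = a then q else \<zero>)"
  have w: "w \<in> W \<rightarrow> carrier R"
    using pq unfolding w_def by auto
  have "codeword R W V w l = V b l \<otimes> p \<oplus> V a l \<otimes> q" if "l \<in> {0, 1}" for l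
    using codeword_eq_finsum_on_support[OF finite _ _ w, of "{b, a}" V l] pq j a that code_vector_closed
    by (auto simp: w_def finsum_insert)
  then have "\<forall>l<2. codeword R W V w l = \<zero>"
    using pq by (auto simp: less_2_cases_iff)
  moreover have "\<forall>i\<in>S j. w i = \<zero>"
    using j a by (auto simp: w_def)
  ultimately have "w b = \<zero>"
    using valid_code_kernel_demand_zero[OF valid j(1,2) w] by blast
  with pq show False
    by (simp add: w_def)
qed

lemma det2_eq_zero_if_same_alignment_set:
  assumes icp: "index_coding_problem W Rcv D S" and "same_alignment_set W Rcv D S a b"
  shows "det2 R V a b = \<zero>"
proof -
  have "a \<in> W" "(align_edge W Rcv D S)\<^sup>*\<^sup>* a b"
    using assms(2) unfolding same_alignment_set_def by auto
  from this(2) show ?thesis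
  proof (induction rule: rtranclp_induct)
    case base
    show ?case
      using code_vector_closed[OF \<open>a \<in> W\<close>] by (rule det2_self)
  next
    case (step b c)
    from step.hyps(2) obtain j k where jk: "j \<in> Rcv" "k \<in> D j"
      "b \<in> W - S j - {k}" "c \<in> W - S j - {k}" "b \<noteq> c"
      unfolding align_edge_def by auto
    have "k \<in> W - S j"
      using icp jk(1,2) unfolding index_coding_problem_def by auto
    then have "det2 R V b c = \<zero>"
      using det2_eq_zero_if_interfering[OF jk(1,2) _ jk(3-5)] by simp
    moreover have "b \<in> W" "c \<in> W"
      using jk by auto
    ultimately show ?case
      using det2_trans[of V a b c] code_vector_closed \<open>a \<in> W\<close> code_vector_nonzero[OF icp \<open>b \<in> W\<close>] step.IH
      by blast
  qed
qed

end

lemma no_valid_length2_code_if_internal_conflict: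
  assumes icp: "index_coding_problem W Rcv D S" and "has_internal_conflict W Rcv D S"
  shows "\<not> valid_scalar_linear_code R W Rcv D S 2 V"
proof
  assume valid: "valid_scalar_linear_code R W Rcv D S 2 V"
  have finite: "finite W" and demands: "\<forall>j\<in>Rcv. D j \<subseteq> W \<and> S j \<subseteq> W - D j"
    using icp unfolding index_coding_problem_def by auto
  obtain a b j where j: "j \<in> Rcv" "b \<in> D j" and "a \<in> Interf W D S j b"
    and aligned: "same_alignment_set W Rcv D S a b"
    using assms(2) by (rule obtain_internal_conflict)
  with demands have "b \<in> W - S j" "a \<in> W - S j - {b}"
    unfolding Interf_def by auto
  with j have "det2 R V a b \<noteq> \<zero>"
    using det2_neq_zero_if_conflict[OF valid finite] code_vector_nonzero[OF valid finite icp] by simp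
  moreover have "det2 R V a b = \<zero>"
    using det2_eq_zero_if_same_alignment_set[OF valid finite icp aligned] .
  ultimately show False
    by contradiction
qed

lemma decode_if_interference_constant:
  assumes "finite W" "k \<in> W" "k \<notin> S"
    and x: "x \<in> W \<rightarrow> carrier R" and c: "c \<in> carrier R" "x k \<noteq> c" "\<forall>i\<in>W - S - {k}. x i = c"
    and w: "w \<in> W \<rightarrow> carrier R" "w' \<in> W \<rightarrow> carrier R" "\<forall>i\<in>S. w i = w' i"
    and sum: "(\<Oplus>i\<in>W. w i) = (\<Oplus>i\<in>W. w' i)"
    and weighted_sum: "(\<Oplus>i\<in>W. x i \<otimes> w i) = (\<Oplus>i\<in>W. x i \<otimes> w' i)"
  shows "w k = w' k"
proof -
  let ?F = "\<lambda>u. (\<Oplus>i\<in>W. x i \<otimes> u i) \<oplus> \<ominus> c \<otimes> (\<Oplus>i\<in>W. u i)"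
  have F: "?F u = (x k \<ominus> c) \<otimes> u k \<oplus> (\<Oplus>i\<in>W \<inter> S. (x i \<ominus> c) \<otimes> u i)"
    if u: "u \<in> W \<rightarrow> carrier R" for u
  proof -
    have "?F u = (\<Oplus>i\<in>W. x i \<otimes> u i \<oplus> \<ominus> c \<otimes> u i)"
      using x c u \<open>finite W\<close> by (simp add: finsum_rdistr finsum_addf Pi_iff)
    also have "\<dots> = (\<Oplus>i\<in>W. (x i \<ominus> c) \<otimes> u i)"
      using x c u by (intro finsum_cong') (auto simp: minus_eq l_distr Pi_iff)
    also have "\<dots> = (\<Oplus>i\<in>insert k (W \<inter> S). (x i \<ominus> c) \<otimes> u i)"
      using x c u \<open>finite W\<close> \<open>k \<in> W\<close>
      by (intro add.finprod_mono_neutral_cong_right) (auto simp: r_neg minus_eq Pi_iff)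
    also have "\<dots> = (x k \<ominus> c) \<otimes> u k \<oplus> (\<Oplus>i\<in>W \<inter> S. (x i \<ominus> c) \<otimes> u i)"
      using x c u \<open>finite W\<close> \<open>k \<notin> S\<close> \<open>k \<in> W\<close> by (intro finsum_insert) auto
    finally show ?thesis .
  qed
  have "(\<Oplus>i\<in>W \<inter> S. (x i \<ominus> c) \<otimes> w i) = (\<Oplus>i\<in>W \<inter> S. (x i \<ominus> c) \<otimes> w' i)"
    using x c w by (intro finsum_cong') (auto simp: Pi_iff)
  with F[OF w(1)] F[OF w(2)] have "(x k \<ominus> c) \<otimes> w k = (x k \<ominus> c) \<otimes> w' k"
    using sum weighted_sum x c w \<open>k \<in> W\<close> by (simp add: Pi_iff)
  moreover have "x k \<ominus> c \<noteq> \<zero>"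
  proof
    assume "x k \<ominus> c = \<zero>"
    moreover have "x k \<in> carrier R"
      using x \<open>k \<in> W\<close> by blast
    then have "x k = (x k \<ominus> c) \<oplus> c"
      using c by algebra
    ultimately show False
      using c by simp
  qed
  ultimately show ?thesis
    using m_lcancel x c w \<open>k \<in> W\<close> by (simp add: Pi_iff)
qed

lemma valid_length2_code_if_no_internal_conflict:
  assumes icp: "index_coding_problem W Rcv D S" and no_conflict: "\<not> has_internal_conflict W Rcv D S"
    and "finite (carrier R)" "card W \<le> card (carrier R)"
  shows "\<exists>V. valid_scalar_linear_code R W Rcv D S 2 V"
proof -
  have "finite W" and demands: "\<forall>j\<in>Rcv. D j \<subseteq> W \<and> S j \<subseteq> W - D j"
    using icp unfolding index_coding_problem_def by auto
  obtain x where x: "x \<in> W \<rightarrow> carrier R"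
    and x_eq_iff: "\<And>a b. a \<in> W \<Longrightarrow> b \<in> W \<Longrightarrow> x a = x b \<longleftrightarrow> same_alignment_set W Rcv D S a b"
    by (rule obtain_labelling_iff_related[where r = "same_alignment_set W Rcv D S",
        OF \<open>finite W\<close> assms(3,4) same_alignment_set_refl same_alignment_set_sym same_alignment_set_trans]) auto
  define V where "V i l = (if l = 0 then \<one> else x i)" for i and l :: nat
  have "valid_scalar_linear_code R W Rcv D S 2 V"
    unfolding valid_scalar_linear_code_def
  proof (intro conjI ballI allI impI)
    show "V i l \<in> carrier R" if "i \<in> W" for i l
      using x that unfolding V_def by auto
  next
    fix j k w w'
    assume j: "j \<in> Rcv" and k: "k \<in> D j"
      and decodable: "w \<in> W \<rightarrow> carrier R \<and> w' \<in> W \<rightarrow> carrier R \<and> (\<forall>i\<in>S j. w i = w' i) \<and>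
        (\<forall>l<2. codeword R W V w l = codeword R W V w' l)"
    have "k \<in> W" "k \<notin> S j"
      using demands j k by auto
    have "\<exists>c\<in>carrier R. x k \<noteq> c \<and> (\<forall>i\<in>W - S j - {k}. x i = c)"
    proof (cases "W - S j - {k} = {}")
      case True
      then show ?thesis
        by (intro bexI[of _ "if x k = \<zero> then \<one> else \<zero>"]) auto
    next
      case False
      then obtain a where a: "a \<in> W - S j - {k}"
        by blast
      have "x i = x a" if "i \<in> W - S j - {k}" for i
        using x_eq_iff same_alignment_set_if_interfering[where D = D and S = S, OF j k that a] that a
        by auto
      moreover have "x k \<noteq> x a"
      proof
        assume "x k = x a"
        with x_eq_iff \<open>k \<in> W\<close> a have "same_alignment_set W Rcv D S k a"
          by auto
        moreover have "in_conflict W Rcv D S k a"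
          using in_conflict_if_interfering[where D = D and S = S, OF j k \<open>k \<in> W\<close> a] .
        ultimately show False
          using no_conflict unfolding has_internal_conflict_def by blast
      qed
      ultimately show ?thesis
        using x a by blast
    qed
    then obtain c where c: "c \<in> carrier R" "x k \<noteq> c" "\<forall>i\<in>W - S j - {k}. x i = c"
      by blast
    have codeword_0: "codeword R W V u 0 = (\<Oplus>i\<in>W. u i)" if "u \<in> W \<rightarrow> carrier R" for u
      unfolding codeword_def V_def using that by (intro finsum_cong') (auto simp: Pi_iff)
    have codeword_1: "codeword R W V u 1 = (\<Oplus>i\<in>W. x i \<otimes> u i)" for u
      unfolding codeword_def V_def by simp
    from decodable have w: "w \<in> W \<rightarrow> carrier R" "w' \<in> W \<rightarrow> carrier R" "\<forall>i\<in>S j. w i = w' i"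
      and same_0: "codeword R W V w 0 = codeword R W V w' 0"
      and same_1: "codeword R W V w 1 = codeword R W V w' 1"
      by auto
    have "(\<Oplus>i\<in>W. w i) = (\<Oplus>i\<in>W. w' i)"
      using same_0 w by (simp add: codeword_0)
    moreover have "(\<Oplus>i\<in>W. x i \<otimes> w i) = (\<Oplus>i\<in>W. x i \<otimes> w' i)"
      using same_1 unfolding codeword_1 .
    ultimately show "w k = w' k"
      by (rule decode_if_interference_constant[OF \<open>finite W\<close> \<open>k \<in> W\<close> \<open>k \<notin> S j\<close> x c w])
  qed
  then show ?thesis
    by blast
qed

end

theorem theorem5:
  fixes W W' :: "'m set" and T :: nat and D S :: "nat \<Rightarrow> 'm set"
  assumes "index_coding_problem W {1..T} D S"
    and "W' \<subseteq> W"
  shows "(has_internal_conflict W' (restr_receivers W' {1..T} D) (restr_sets W' D) (restr_sets W' S)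
           \<longrightarrow> (\<forall>Fld :: 'e ring. field Fld \<and> finite (carrier Fld) \<longrightarrow>
                 \<not> (\<exists>V. valid_scalar_linear_code Fld W' (restr_receivers W' {1..T} D)
                         (restr_sets W' D) (restr_sets W' S) 2 V)))
       \<and> (\<not> has_internal_conflict W' (restr_receivers W' {1..T} D) (restr_sets W' D) (restr_sets W' S)
           \<longrightarrow> (\<exists>N. \<forall>Fld :: 'e ring. field Fld \<and> finite (carrier Fld) \<and> card (carrier Fld) \<ge> N \<longrightarrow>
                 (\<exists>V. valid_scalar_linear_code Fld W' (restr_receivers W' {1..T} D)
                         (restr_sets W' D) (restr_sets W' S) 2 V)))"
proof -
  let ?R = "restr_receivers W' {1..T} D" and ?D = "restr_sets W' D" and ?S = "restr_sets W' S"
  have icp: "index_coding_problem W' ?R ?D ?S"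
    using index_coding_problem_restrict[OF assms] .
  show ?thesis
  proof (intro conjI impI allI)
    fix Fld :: "'e ring"
    assume "has_internal_conflict W' ?R ?D ?S" and "field Fld \<and> finite (carrier Fld)"
    then show "\<not> (\<exists>V. valid_scalar_linear_code Fld W' ?R ?D ?S 2 V)"
      using field.no_valid_length2_code_if_internal_conflict[OF _ icp] by blast
  next
    assume "\<not> has_internal_conflict W' ?R ?D ?S"
    then show "\<exists>N. \<forall>Fld :: 'e ring. field Fld \<and> finite (carrier Fld) \<and> card (carrier Fld) \<ge> N \<longrightarrow>
        (\<exists>V. valid_scalar_linear_code Fld W' ?R ?D ?S 2 V)"
      using field.valid_length2_code_if_no_internal_conflict[OF _ icp] by blast
  qed
qed

end
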